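(* Let $N$ be a well-formed system (coherent and $\vdash N:\mathbf{ok}$) in the calculus with DFA entry policies. If $N\to N'$, then $N'$ is well-formed; in particular $\vdash N':\mathbf{ok}$.
   Context: Fix disjoint sets $\mathsf{Act}$ (actions) and $\mathsf{Loc}$ (localities). A policy is a minimal DFA $A=(S,\Sigma,s_0,F,\delta)$ with finite $\Sigma\subseteq\mathsf{Act}\cup\mathsf{Loc}$, $\emptyset\ne F\subseteq S$, $\delta:S\times\Sigma\to S$. $Acp_s(A)$ is the set of words in $\Sigma^*$ leading from $s$ to a final state, $Acp(A)=Acp_{s_0}(A)$, and $A_1\ \mathtt{enforces}\ A_2$ iff $Acp(A_1)\subseteq Acp(A_2)$. Agents: $P ::= \mathbf{nil} \mid a.P \mid \mathbf{go}_A\, l.P \mid P\,|\,Q \mid\ !P$. Concurrent regular expressions $e::=\epsilon\mid\alpha\mid e_1.e_2\mid e_1\odot e_2\mid e^{\otimes}$ with $lang(\epsilon)=\{\epsilon\}$, $lang(\alpha)=\{\alpha\}$, $lang(e_1.e_2)=\{x_1x_2: x_i\in lang(e_i)\}$, $lang(e_1\odot e_2)=\{x_1y_1\cdots x_ny_n : x_1\cdots x_n\in lang(e_1), y_1\cdots y_n\in lang(e_2)\}$ (components may be empty), $lang(e^\otimes)=\bigcup_{i\ge0}L^{\otimes i}$ with $L=lang(e)$, $L^{\otimes0}=\{\epsilon\}$, $L^{\otimes i}=L^{\otimes(i-1)}\odot L$. $\mathrm{CRE}(\mathbf{nil})=\epsilon$, $\mathrm{CRE}(a.P)=a.\mathrm{CRE}(P)$,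 $\mathrm{CRE}(\mathbf{go}_A\,l.P)=l$, $\mathrm{CRE}(P_1|P_2)=\mathrm{CRE}(P_1)\odot\mathrm{CRE}(P_2)$, $\mathrm{CRE}(!P)=\mathrm{CRE}(P)^\otimes$. $\vdash P:A$ iff $lang(\mathrm{CRE}(P))\subseteq Acp(A)$ and $\vdash Q:A'$ for every subterm $\mathbf{go}_{A'}\,l.Q$ of $P$. Systems: $N ::= \mathbf{0} \mid l[\![M \rhd P]\!] \mid N_1\parallel N_2$, site names pairwise distinct; membrane $M=(M_t,M_p)$, $M_t$ a partial function $\mathsf{Loc}\to\{\mathtt{loc},\mathtt{lgood},\mathtt{lbad}\}$, $M_p$ a policy. Structural equivalence: least congruence such that inside a site $|$ is commutative, associative with unit $\mathbf{nil}$, $l[\![M\rhd\ !P|Q]\!]\equiv l[\![M\rhd P|!P|Q]\!]$, and $\parallel$ commutative, associative with unit $\mathbf{0}$. Reduction: (act) $l[\![M\rhd a.P|Q]\!]\to l[\![M\rhd P|Q]\!]$; (par) $N_1\to N_1'$ implies $N_1\parallel N_2\to N_1'\parallel N_2$; (struct) $N\equiv N_1\to N_1'\equiv N'$ implies $N\to N'$; (mig) $k[\![M^k\rhd\mathbf{go}_A\,l.P|Q]\!]\parallel l[\![M^l\rhd R]\!]\to k[\![M^k\rhd Q]\!]\parallel l[\![M^l\rhd P|R]\!]$ provided: if $M^l_t(k)=\mathtt{lgood}$ then $Acp(A)\subseteq Acp(M^l_p)$, else $\vdash P:M^l_p$. Trust order $<:$ reflexive with $\mathtt{loc}<:\mathtt{lbad}$,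 $\mathtt{loc}<:\mathtt{lgood}$; $k$ trustworthy iff $M^k_t(k)=\mathtt{lgood}$; $N$ coherent iff for every trustworthy $k$ and site $l$ with $M^k_t(l)$ defined, $M^k_t(l)<:M^l_t(l)$. A thread is an agent not of the form $P_1|P_2$. $\vdash N:\mathbf{ok}$: $\vdash\mathbf{0}:\mathbf{ok}$; $\vdash N_1\parallel N_2:\mathbf{ok}$ if both are; $\vdash l[\![M\rhd P_1|\dots|P_n]\!]:\mathbf{ok}$ if $l$ is trustworthy and each $P_i$ is a thread such that there is a state $s$ of $M_p$ with $lang(\mathrm{CRE}(P_i))\subseteq Acp_s(M_p)$, and moreover $\vdash Q:A'$ for every subterm $\mathbf{go}_{A'}\,h.Q$ of $P_i$; $\vdash l[\![M\rhd P]\!]:\mathbf{ok}$ if $l$ not trustworthy. *)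

theory Defs
  imports Main
begin

text \<open>Actions 'a and localities 'l are kept disjoint by a sum type.\<close>
datatype ('a, 'l) sym = SAct 'a | SLoc 'l

type_synonym ('a, 'l) word = "('a, 'l) sym list"

record ('a, 'l) dfa =
  states :: "nat set"
  alpha  :: "('a, 'l) sym set"
  init   :: nat
  final  :: "nat set"
  delta  :: "nat \<Rightarrow> ('a, 'l) sym \<Rightarrow> nat"

definition is_dfa :: "('a, 'l) dfa \<Rightarrow> bool" where
  "is_dfa A \<longleftrightarrow> finite (states A) \<and> finite (alpha A) \<and> init A \<in> states A
     \<and> final A \<noteq> {} \<and> final A \<subseteq> states A
     \<and> (\<forall>s\<in>states A. \<forall>x\<in>alpha A. delta A s x \<in> states A)"

definition Acp_from :: "('a, 'l) dfa \<Rightarrow> nat \<Rightarrow> ('a, 'l) word set" where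
  "Acp_from A s = {w. w \<in> lists (alpha A) \<and> foldl (delta A) s w \<in> final A}"

definition Acp :: "('a, 'l) dfa \<Rightarrow> ('a, 'l) word set" where
  "Acp A = Acp_from A (init A)"

definition enforces :: "('a, 'l) dfa \<Rightarrow> ('a, 'l) dfa \<Rightarrow> bool" where
  "enforces A1 A2 \<longleftrightarrow> Acp A1 \<subseteq> Acp A2"

definition minimal_dfa :: "('a, 'l) dfa \<Rightarrow> bool" where
  "minimal_dfa A \<longleftrightarrow> is_dfa A \<and>
     (\<forall>B :: ('a, 'l) dfa. is_dfa B \<and> alpha B = alpha A \<and> Acp B = Acp A
        \<longrightarrow> card (states A) \<le> card (states B))"

abbreviation policy :: "('a, 'l) dfa \<Rightarrow> bool" where
  "policy A \<equiv> minimal_dfa A"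

datatype ('a, 'l) agent =
    ANil
  | APre 'a "('a, 'l) agent"
  | AGo "('a, 'l) dfa" 'l "('a, 'l) agent"
  | APar "('a, 'l) agent" "('a, 'l) agent"
  | ABang "('a, 'l) agent"

datatype ('a, 'l) cre =
    CEps
  | CSym "('a, 'l) sym"
  | CSeq "('a, 'l) cre" "('a, 'l) cre"
  | CShuf "('a, 'l) cre" "('a, 'l) cre"
  | CStar "('a, 'l) cre"

text \<open>L1 \<odot> L2 = {x1 y1 ... xn yn | x1...xn \<in> L1, y1...yn \<in> L2} (components may be empty).\<close>
definition shuffle_lang :: "'b list set \<Rightarrow> 'b list set \<Rightarrow> 'b list set" where
  "shuffle_lang L1 L2 =
     {concat (map2 (@) xs ys) | xs ys. length xs = length ys \<and> concat xs \<in> L1 \<and> concat ys \<in> L2}"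

fun shuf_pow :: "'b list set \<Rightarrow> nat \<Rightarrow> 'b list set" where
  "shuf_pow L 0 = {[]}"
| "shuf_pow L (Suc i) = shuffle_lang (shuf_pow L i) L"

fun lang :: "('a, 'l) cre \<Rightarrow> ('a, 'l) word set" where
  "lang CEps = {[]}"
| "lang (CSym x) = {[x]}"
| "lang (CSeq e1 e2) = {x1 @ x2 | x1 x2. x1 \<in> lang e1 \<and> x2 \<in> lang e2}"
| "lang (CShuf e1 e2) = shuffle_lang (lang e1) (lang e2)"
| "lang (CStar e) = (\<Union>i. shuf_pow (lang e) i)"

fun CRE :: "('a, 'l) agent \<Rightarrow> ('a, 'l) cre" where
  "CRE ANil = CEps"
| "CRE (APre a P) = CSeq (CSym (SAct a)) (CRE P)"
| "CRE (AGo A l P) = CSym (SLoc l)"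
| "CRE (APar P1 P2) = CShuf (CRE P1) (CRE P2)"
| "CRE (ABang P) = CStar (CRE P)"

fun gos_ok :: "('a, 'l) agent \<Rightarrow> bool" where
  "gos_ok ANil = True"
| "gos_ok (APre a P) = gos_ok P"
| "gos_ok (AGo A l Q) = (lang (CRE Q) \<subseteq> Acp A \<and> gos_ok Q)"
| "gos_ok (APar P1 P2) = (gos_ok P1 \<and> gos_ok P2)"
| "gos_ok (ABang P) = gos_ok P"

definition agent_typed :: "('a, 'l) agent \<Rightarrow> ('a, 'l) dfa \<Rightarrow> bool" where
  "agent_typed P A \<longleftrightarrow> lang (CRE P) \<subseteq> Acp A \<and> gos_ok P"

datatype trust = TLoc | LGood | LBad

record ('a, 'l) membrane =
  Mt :: "'l \<Rightarrow> trust option"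
  Mp :: "('a, 'l) dfa"

datatype ('a, 'l) sys =
    SZero
  | Site 'l "('a, 'l) membrane" "('a, 'l) agent"
  | SPar "('a, 'l) sys" "('a, 'l) sys"

fun site_names :: "('a, 'l) sys \<Rightarrow> 'l list" where
  "site_names SZero = []"
| "site_names (Site l M P) = [l]"
| "site_names (SPar N1 N2) = site_names N1 @ site_names N2"

fun sites :: "('a, 'l) sys \<Rightarrow> ('l \<times> ('a, 'l) membrane \<times> ('a, 'l) agent) set" where
  "sites SZero = {}"
| "sites (Site l M P) = {(l, M, P)}"
| "sites (SPar N1 N2) = sites N1 \<union> sites N2"

fun agent_policies :: "('a, 'l) agent \<Rightarrow> ('a, 'l) dfa set" where
  "agent_policies ANil = {}"
| "agent_policies (APre a P) = agent_policies P"
| "agent_policies (AGo A l P) = insert A (agent_policies P)"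
| "agent_policies (APar P Q) = agent_policies P \<union> agent_policies Q"
| "agent_policies (ABang P) = agent_policies P"

fun sys_policies :: "('a, 'l) sys \<Rightarrow> ('a, 'l) dfa set" where
  "sys_policies SZero = {}"
| "sys_policies (Site l M P) = insert (Mp M) (agent_policies P)"
| "sys_policies (SPar N1 N2) = sys_policies N1 \<union> sys_policies N2"

definition is_system :: "('a, 'l) sys \<Rightarrow> bool" where
  "is_system N \<longleftrightarrow> distinct (site_names N) \<and> (\<forall>A\<in>sys_policies N. policy A)"

inductive agent_equiv :: "('a, 'l) agent \<Rightarrow> ('a, 'l) agent \<Rightarrow> bool" where
  ae_refl: "agent_equiv P P"
| ae_sym: "agent_equiv P Q \<Longrightarrow> agent_equiv Q P"
| ae_trans: "agent_equiv P Q \<Longrightarrow> agent_equiv Q R \<Longrightarrow> agent_equiv P R"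
| ae_comm: "agent_equiv (APar P Q) (APar Q P)"
| ae_assoc: "agent_equiv (APar (APar P Q) R) (APar P (APar Q R))"
| ae_unit: "agent_equiv (APar P ANil) P"
| ae_pre: "agent_equiv P Q \<Longrightarrow> agent_equiv (APre a P) (APre a Q)"
| ae_go: "agent_equiv P Q \<Longrightarrow> agent_equiv (AGo A l P) (AGo A l Q)"
| ae_par: "agent_equiv P P' \<Longrightarrow> agent_equiv Q Q' \<Longrightarrow> agent_equiv (APar P Q) (APar P' Q')"
| ae_bang: "agent_equiv P Q \<Longrightarrow> agent_equiv (ABang P) (ABang Q)"

inductive sys_equiv :: "('a, 'l) sys \<Rightarrow> ('a, 'l) sys \<Rightarrow> bool" where
  se_refl: "sys_equiv N N"
| se_sym: "sys_equiv N N' \<Longrightarrow> sys_equiv N' N"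
| se_trans: "sys_equiv N1 N2 \<Longrightarrow> sys_equiv N2 N3 \<Longrightarrow> sys_equiv N1 N3"
| se_site: "agent_equiv P Q \<Longrightarrow> sys_equiv (Site l M P) (Site l M Q)"
| se_bang: "sys_equiv (Site l M (APar (ABang P) Q)) (Site l M (APar P (APar (ABang P) Q)))"
| se_par: "sys_equiv N1 N1' \<Longrightarrow> sys_equiv N2 N2' \<Longrightarrow> sys_equiv (SPar N1 N2) (SPar N1' N2')"
| se_comm: "sys_equiv (SPar N1 N2) (SPar N2 N1)"
| se_assoc: "sys_equiv (SPar (SPar N1 N2) N3) (SPar N1 (SPar N2 N3))"
| se_unit: "sys_equiv (SPar N SZero) N"

definition mig_ok :: "'l \<Rightarrow> ('a, 'l) dfa \<Rightarrow> ('a, 'l) agent \<Rightarrow> ('a, 'l) membrane \<Rightarrow> bool" where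
  "mig_ok k A P Ml \<longleftrightarrow>
     (if Mt Ml k = Some LGood then Acp A \<subseteq> Acp (Mp Ml) else agent_typed P (Mp Ml))"

inductive red :: "('a, 'l) sys \<Rightarrow> ('a, 'l) sys \<Rightarrow> bool" where
  r_act: "red (Site l M (APar (APre a P) Q)) (Site l M (APar P Q))"
| r_par: "red N1 N1' \<Longrightarrow> red (SPar N1 N2) (SPar N1' N2)"
| r_struct: "sys_equiv N N1 \<Longrightarrow> red N1 N1' \<Longrightarrow> sys_equiv N1' N' \<Longrightarrow> red N N'"
| r_mig: "mig_ok k A P Ml \<Longrightarrow>
    red (SPar (Site k Mk (APar (AGo A l P) Q)) (Site l Ml R))
        (SPar (Site k Mk Q) (Site l Ml (APar P R)))"

definition trust_le :: "trust \<Rightarrow> trust \<Rightarrow> bool" where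
  "trust_le x y \<longleftrightarrow> x = y \<or> (x = TLoc \<and> (y = LBad \<or> y = LGood))"

definition trustworthy_in :: "'l \<Rightarrow> ('a, 'l) membrane \<Rightarrow> bool" where
  "trustworthy_in k M \<longleftrightarrow> Mt M k = Some LGood"

definition coherent :: "('a, 'l) sys \<Rightarrow> bool" where
  "coherent N \<longleftrightarrow>
     (\<forall>k Mk Pk l Ml Pl t. (k, Mk, Pk) \<in> sites N \<and> trustworthy_in k Mk
        \<and> (l, Ml, Pl) \<in> sites N \<and> Mt Mk l = Some t
        \<longrightarrow> (\<exists>t'. Mt Ml l = Some t' \<and> trust_le t t'))"

fun threads :: "('a, 'l) agent \<Rightarrow> ('a, 'l) agent list" where
  "threads (APar P Q) = threads P @ threads Q"
| "threads P = [P]"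

fun sys_ok :: "('a, 'l) sys \<Rightarrow> bool" where
  "sys_ok SZero = True"
| "sys_ok (SPar N1 N2) = (sys_ok N1 \<and> sys_ok N2)"
| "sys_ok (Site l M P) =
     (trustworthy_in l M \<longrightarrow>
       (\<forall>Pi\<in>set (threads P).
          (\<exists>s\<in>states (Mp M). lang (CRE Pi) \<subseteq> Acp_from (Mp M) s) \<and> gos_ok Pi))"

end

theory Submission
  imports Defs
begin

text \<open>Coherence only depends on the membranes of the sites, and reduction never changes
  them. For typing, the key observations are: structural congruence preserves the language of
  an agent's concurrent regular expression, because shuffle is associative and commutative with
  unit \<open>{[]}\<close>; an agent whose whole language is accepted from some state splits into threads whose
  languages are accepted from suitable reachable states (the state reached after a word of the
  sibling threads, which exists since languages are nonempty); and an action step just moves that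
  state along. A migrating agent \<open>P\<close> is typed against the target policy either by the entry check,
  or, when the target deems the source \<open>lgood\<close>, because coherence makes the source trustworthy, so
  its thread \<open>go\<^sub>A l.P\<close> was well typed and \<open>lang P \<subseteq> Acp A \<subseteq> Acp M\<^sub>p\<close>.\<close>

lemma append_in_shuffles_leftI: "zs \<in> shuffles xs ys \<Longrightarrow> ws @ zs \<in> shuffles (ws @ xs) ys"
  by (induction ws) (auto intro: Cons_in_shuffles_leftI)

lemma append_in_shuffles_rightI: "zs \<in> shuffles xs ys \<Longrightarrow> ws @ zs \<in> shuffles xs (ws @ ys)"
  using append_in_shuffles_leftI by (metis shuffles_commutes)

lemma append_in_shuffles: "xs @ ys \<in> shuffles xs ys"
  using append_in_shuffles_leftI[of ys "[]" ys xs] by simp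

lemma shuffles_assoc:
  "zs \<in> shuffles ws xs \<Longrightarrow> ws \<in> shuffles us vs \<Longrightarrow> \<exists>ts. ts \<in> shuffles vs xs \<and> zs \<in> shuffles us ts"
proof (induction zs arbitrary: ws xs us vs)
  case Nil
  then show ?case by simp
next
  case (Cons z zs)
  from Cons.prems(1) consider
      ws' where "ws = z # ws'" "zs \<in> shuffles ws' xs"
    | xs' where "xs = z # xs'" "zs \<in> shuffles ws xs'"
    by (auto simp: Cons_in_shuffles_iff neq_Nil_conv)
  then show ?case
  proof cases
    case (1 ws')
    with Cons.prems(2) consider
        us' where "us = z # us'" "ws' \<in> shuffles us' vs"
      | vs' where "vs = z # vs'" "ws' \<in> shuffles us vs'"
      by (auto simp: Cons_in_shuffles_iff neq_Nil_conv)
    then show ?thesis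
    proof cases
      case (1 us')
      with Cons.IH \<open>zs \<in> shuffles ws' xs\<close> obtain ts where "ts \<in> shuffles vs xs" "zs \<in> shuffles us' ts"
        by blast
      with 1 show ?thesis by (auto intro: Cons_in_shuffles_leftI)
    next
      case (2 vs')
      with Cons.IH \<open>zs \<in> shuffles ws' xs\<close> obtain ts where "ts \<in> shuffles vs' xs" "zs \<in> shuffles us ts"
        by blast
      with 2 show ?thesis by (auto intro: Cons_in_shuffles_leftI Cons_in_shuffles_rightI)
    qed
  next
    case (2 xs')
    with Cons.IH Cons.prems(2) obtain ts where "ts \<in> shuffles vs xs'" "zs \<in> shuffles us ts"
      by blast
    with 2 show ?thesis by (auto intro: Cons_in_shuffles_rightI)
  qed
qed

lemma concat_map2_append_in_shuffles:
  "length xss = length yss \<Longrightarrow> concat (map2 (@) xss yss) \<in> shuffles (concat xss) (concat yss)"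
proof (induction xss yss rule: list_induct2)
  case Nil
  then show ?case by simp
next
  case (Cons xs xss ys yss)
  then show ?case using append_in_shuffles_leftI[OF append_in_shuffles_rightI] by simp
qed

lemma in_shuffles_concat_map2:
  "zs \<in> shuffles xs ys \<Longrightarrow> \<exists>xss yss. length xss = length yss \<and> concat xss = xs \<and> concat yss = ys
     \<and> concat (map2 (@) xss yss) = zs"
proof (induction xs ys arbitrary: zs rule: shuffles.induct)
  case (1 ys)
  then show ?case by (intro exI[of _ "[[]]"] exI[of _ "[ys]"]) simp
next
  case (2 xs)
  then show ?case by (intro exI[of _ "[xs]"] exI[of _ "[[]]"]) simp
next
  case (3 x xs y ys)
  then consider
      zs' where "zs = x # zs'" "zs' \<in> shuffles xs (y # ys)"
    | zs' where "zs = y # zs'" "zs' \<in> shuffles (x # xs) ys"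
    by auto
  then show ?case
  proof cases
    case (1 zs')
    with "3.IH"(1) obtain xss yss where "length xss = length yss" "concat xss = xs"
      "concat yss = y # ys" "concat (map2 (@) xss yss) = zs'" by blast
    with 1 show ?thesis by (intro exI[of _ "[x] # xss"] exI[of _ "[] # yss"]) simp
  next
    case (2 zs')
    with "3.IH"(2) obtain xss yss where "length xss = length yss" "concat xss = x # xs"
      "concat yss = ys" "concat (map2 (@) xss yss) = zs'" by blast
    with 2 show ?thesis by (intro exI[of _ "[] # xss"] exI[of _ "[y] # yss"]) simp
  qed
qed

lemma in_shuffle_lang_iff: "zs \<in> shuffle_lang L1 L2 \<longleftrightarrow> (\<exists>xs\<in>L1. \<exists>ys\<in>L2. zs \<in> shuffles xs ys)"
  unfolding shuffle_lang_def
  using concat_map2_append_in_shuffles in_shuffles_concat_map2 by fastforce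

lemma shuffle_lang_commute: "shuffle_lang L1 L2 = shuffle_lang L2 L1"
  unfolding set_eq_iff in_shuffle_lang_iff using shuffles_commutes by blast

lemma shuffle_lang_assoc: "shuffle_lang (shuffle_lang L1 L2) L3 = shuffle_lang L1 (shuffle_lang L2 L3)"
proof -
  have assoc_rev: "\<exists>ts \<in> shuffles xs ys. zs \<in> shuffles ts us"
    if "zs \<in> shuffles xs ws" "ws \<in> shuffles ys us" for xs ys us ws zs :: "'a list"
    using shuffles_assoc[of zs ws xs us ys] that by (auto simp: shuffles_commutes)
  show ?thesis
    unfolding set_eq_iff in_shuffle_lang_iff Bex_def by (auto; meson shuffles_assoc assoc_rev)
qed

lemma shuffle_lang_Nil_right [simp]: "shuffle_lang L {[]} = L"
  unfolding set_eq_iff in_shuffle_lang_iff by simp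

lemma lang_nonempty: "lang e \<noteq> {}"
proof (induction e)
  case (CShuf e1 e2)
  then show ?case using append_in_shuffles by (fastforce simp: in_shuffle_lang_iff)
next
  case (CStar e)
  have "[] \<in> shuf_pow (lang e) 0" by simp
  then show ?case by (auto simp del: shuf_pow.simps)
qed auto

lemma lang_subset_lang_CStar: "lang e \<subseteq> lang (CStar e)"
proof -
  have "shuf_pow (lang e) 1 = lang e"
    by (simp add: shuffle_lang_commute)
  then show ?thesis by (auto simp del: shuf_pow.simps)
qed

lemma lang_CRE_agent_equiv: "agent_equiv P Q \<Longrightarrow> lang (CRE P) = lang (CRE Q)"
proof (induction rule: agent_equiv.induct)
  case (ae_comm P Q)
  then show ?case by (simp add: shuffle_lang_commute)
qed (simp_all add: shuffle_lang_assoc)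

lemma gos_ok_agent_equiv: "agent_equiv P Q \<Longrightarrow> gos_ok P \<longleftrightarrow> gos_ok Q"
  by (induction rule: agent_equiv.induct) (auto simp: lang_CRE_agent_equiv)

lemma foldl_delta_in_states:
  "is_dfa D \<Longrightarrow> s \<in> states D \<Longrightarrow> w \<in> lists (alpha D) \<Longrightarrow> foldl (delta D) s w \<in> states D"
  by (induction w arbitrary: s) (auto simp: is_dfa_def)

lemma append_in_Acp_from_iff:
  "v @ w \<in> Acp_from D s \<longleftrightarrow> v \<in> lists (alpha D) \<and> w \<in> Acp_from D (foldl (delta D) s v)"
  unfolding Acp_from_def by auto

lemma Acp_from_residual:
  assumes "is_dfa D" "s \<in> states D" "L \<noteq> {}" "\<And>w. w \<in> L \<Longrightarrow> v @ w \<in> Acp_from D s"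
  shows "\<exists>s'\<in>states D. L \<subseteq> Acp_from D s'"
proof
  show "L \<subseteq> Acp_from D (foldl (delta D) s v)"
    using assms(4) append_in_Acp_from_iff by blast
  from assms(3,4) have "v \<in> lists (alpha D)"
    using append_in_Acp_from_iff by blast
  with assms(1,2) show "foldl (delta D) s v \<in> states D"
    by (rule foldl_delta_in_states)
qed

definition thread_typed :: "('a, 'l) dfa \<Rightarrow> ('a, 'l) agent \<Rightarrow> bool" where
  "thread_typed D P \<longleftrightarrow> (\<exists>s\<in>states D. lang (CRE P) \<subseteq> Acp_from D s) \<and> gos_ok P"

definition threads_typed :: "('a, 'l) dfa \<Rightarrow> ('a, 'l) agent \<Rightarrow> bool" where
  "threads_typed D P \<longleftrightarrow> (\<forall>T\<in>set (threads P). thread_typed D T)"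

lemma threads_typed_APar [simp]:
  "threads_typed D (APar P Q) \<longleftrightarrow> threads_typed D P \<and> threads_typed D Q"
  by (auto simp: threads_typed_def)

lemma sys_ok_Site [simp]: "sys_ok (Site l M P) \<longleftrightarrow> (trustworthy_in l M \<longrightarrow> threads_typed (Mp M) P)"
  by (simp add: threads_typed_def thread_typed_def)

declare sys_ok.simps(3) [simp del]

lemma threads_typed_ANil: "is_dfa D \<Longrightarrow> threads_typed D ANil"
  by (auto simp: threads_typed_def thread_typed_def is_dfa_def Acp_from_def)

lemma Acp_from_shuffle_lang_left:
  assumes "is_dfa D" "s \<in> states D" "shuffle_lang L1 L2 \<subseteq> Acp_from D s" "L1 \<noteq> {}" "L2 \<noteq> {}"
  shows "\<exists>s'\<in>states D. L1 \<subseteq> Acp_from D s'"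
proof -
  obtain v where "v \<in> L2" using assms(5) by blast
  then have "v @ w \<in> Acp_from D s" if "w \<in> L1" for w
    using that assms(3) append_in_shuffles shuffles_commutes by (fastforce simp: in_shuffle_lang_iff)
  then show ?thesis using Acp_from_residual assms(1,2,4) by blast
qed

lemma threads_typed_if_thread_typed:
  assumes "is_dfa D"
  shows "thread_typed D P \<Longrightarrow> threads_typed D P"
proof (induction P)
  case (APar P1 P2)
  from APar.prems obtain s where s: "s \<in> states D"
    and shuffle: "shuffle_lang (lang (CRE P1)) (lang (CRE P2)) \<subseteq> Acp_from D s"
    and "gos_ok P1" "gos_ok P2"
    by (auto simp: thread_typed_def)
  have "thread_typed D P1"
    using Acp_from_shuffle_lang_left[OF assms s shuffle lang_nonempty lang_nonempty] \<open>gos_ok P1\<close>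
    by (simp add: thread_typed_def)
  moreover have "thread_typed D P2"
    using Acp_from_shuffle_lang_left[OF assms s shuffle[unfolded shuffle_lang_commute[of "lang (CRE P1)"]]
        lang_nonempty lang_nonempty] \<open>gos_ok P2\<close>
    by (simp add: thread_typed_def)
  ultimately show ?case using APar.IH by simp
qed (simp_all add: threads_typed_def)

lemma threads_typed_if_agent_typed: "is_dfa D \<Longrightarrow> agent_typed P D \<Longrightarrow> threads_typed D P"
  by (rule threads_typed_if_thread_typed)
    (auto simp: is_dfa_def agent_typed_def thread_typed_def Acp_def)

lemma threads_typed_agent_equiv:
  "agent_equiv P Q \<Longrightarrow> is_dfa D \<Longrightarrow> threads_typed D P \<longleftrightarrow> threads_typed D Q"
proof (induction rule: agent_equiv.induct)
  case (ae_unit P)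
  then show ?case by (simp add: threads_typed_ANil)
qed (auto simp: threads_typed_def thread_typed_def lang_CRE_agent_equiv gos_ok_agent_equiv)

lemma threads_typed_unfold_ABang:
  assumes "is_dfa D"
  shows "threads_typed D (APar (ABang P) Q) \<longleftrightarrow> threads_typed D (APar P (APar (ABang P) Q))"
proof -
  have "thread_typed D P" if "thread_typed D (ABang P)"
    using that lang_subset_lang_CStar[of "CRE P"] by (auto simp: thread_typed_def)
  then show ?thesis
    using threads_typed_if_thread_typed[OF assms] by (auto simp: threads_typed_def)
qed

lemma threads_typed_act:
  assumes "is_dfa D" "threads_typed D (APar (APre a P) Q)"
  shows "threads_typed D (APar P Q)"
proof -
  from assms(2) obtain s where "s \<in> states D" "lang (CRE (APre a P)) \<subseteq> Acp_from D s" "gos_ok P"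
    by (auto simp: threads_typed_def thread_typed_def)
  moreover from this have "[SAct a] @ w \<in> Acp_from D s" if "w \<in> lang (CRE P)" for w
    using that by auto
  ultimately have "thread_typed D P"
    using Acp_from_residual[OF assms(1)] lang_nonempty by (meson thread_typed_def)
  with assms show ?thesis
    using threads_typed_if_thread_typed by simp
qed

definition site_membranes :: "('a, 'l) sys \<Rightarrow> ('l \<times> ('a, 'l) membrane) set" where
  "site_membranes N = (\<lambda>(l, M, P). (l, M)) ` sites N"

lemma site_membranes_simps [simp]:
  "site_membranes SZero = {}"
  "site_membranes (Site l M P) = {(l, M)}"
  "site_membranes (SPar N1 N2) = site_membranes N1 \<union> site_membranes N2"
  by (simp_all add: site_membranes_def image_Un)

definition dfa_membranes :: "('a, 'l) sys \<Rightarrow> bool" where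
  "dfa_membranes N \<longleftrightarrow> (\<forall>(l, M)\<in>site_membranes N. is_dfa (Mp M))"

lemma dfa_membranes_simps [simp]:
  "dfa_membranes (Site l M P) \<longleftrightarrow> is_dfa (Mp M)"
  "dfa_membranes (SPar N1 N2) \<longleftrightarrow> dfa_membranes N1 \<and> dfa_membranes N2"
  by (auto simp: dfa_membranes_def)

lemma dfa_membranes_if_is_system: "is_system N \<Longrightarrow> dfa_membranes N"
proof -
  have "(l, M, P) \<in> sites N \<Longrightarrow> Mp M \<in> sys_policies N" for l M P
    by (induction N) auto
  then show "is_system N \<Longrightarrow> dfa_membranes N"
    by (auto simp: is_system_def dfa_membranes_def site_membranes_def minimal_dfa_def)
qed

lemma in_site_membranes_iff: "(l, M) \<in> site_membranes N \<longleftrightarrow> (\<exists>P. (l, M, P) \<in> sites N)"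
  by (force simp: site_membranes_def)

lemma coherent_site_membranes_cong:
  "site_membranes N = site_membranes N' \<Longrightarrow> coherent N \<longleftrightarrow> coherent N'"
  unfolding coherent_def set_eq_iff by (simp add: in_site_membranes_iff) meson

lemma coherent_SPar_left: "coherent (SPar N1 N2) \<Longrightarrow> coherent N1"
  unfolding coherent_def by simp blast

lemma site_membranes_sys_equiv: "sys_equiv N N' \<Longrightarrow> site_membranes N = site_membranes N'"
  by (induction rule: sys_equiv.induct) auto

lemma site_membranes_red: "red N N' \<Longrightarrow> site_membranes N' = site_membranes N"
proof (induction rule: red.induct)
  case (r_struct N N1 N1' N')
  then show ?case by (metis site_membranes_sys_equiv)
qed auto

lemma sys_ok_sys_equiv: "sys_equiv N N' \<Longrightarrow> dfa_membranes N \<Longrightarrow> sys_ok N \<longleftrightarrow> sys_ok N'"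
proof (induction rule: sys_equiv.induct)
  case (se_sym N N')
  then show ?case by (simp add: dfa_membranes_def site_membranes_sys_equiv)
next
  case (se_trans N1 N2 N3)
  then show ?case by (simp add: dfa_membranes_def site_membranes_sys_equiv)
next
  case (se_site P Q l M)
  then show ?case by (simp add: threads_typed_agent_equiv)
next
  case (se_bang l M P Q)
  then show ?case using threads_typed_unfold_ABang[of "Mp M" P Q] by simp
qed auto

lemma coherent_LGood_trustworthy:
  assumes "coherent N" "(l, Ml, Pl) \<in> sites N" "trustworthy_in l Ml"
    and "(k, Mk, Pk) \<in> sites N" "Mt Ml k = Some LGood"
  shows "trustworthy_in k Mk"
  using assms unfolding coherent_def trustworthy_in_def trust_le_def by blast

lemma sys_ok_mig:
  assumes "mig_ok k A P Ml"
    and "coherent (SPar (Site k Mk (APar (AGo A l P) Q)) (Site l Ml R))"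
    and "is_dfa (Mp Ml)"
    and "sys_ok (SPar (Site k Mk (APar (AGo A l P) Q)) (Site l Ml R))"
  shows "sys_ok (SPar (Site k Mk Q) (Site l Ml (APar P R)))"
proof -
  have "agent_typed P (Mp Ml)" if "trustworthy_in l Ml"
  proof (cases "Mt Ml k = Some LGood")
    case True
    with assms(2) that have "trustworthy_in k Mk"
      by (auto intro: coherent_LGood_trustworthy)
    with assms(4) have "gos_ok (AGo A l P)"
      by (simp add: threads_typed_def thread_typed_def)
    with True assms(1) show ?thesis
      by (auto simp: mig_ok_def agent_typed_def)
  next
    case False
    with assms(1) show ?thesis by (simp add: mig_ok_def)
  qed
  with assms(3,4) show ?thesis
    by (auto intro: threads_typed_if_agent_typed)
qed

lemma sys_ok_red: "red N N' \<Longrightarrow> coherent N \<Longrightarrow> dfa_membranes N \<Longrightarrow> sys_ok N \<Longrightarrow> sys_ok N'"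
proof (induction rule: red.induct)
  case (r_act l M a P Q)
  then show ?case using threads_typed_act[of "Mp M" a P Q] by simp
next
  case (r_par N1 N1' N2)
  then show ?case by (auto dest: coherent_SPar_left)
next
  case (r_struct N N1 N1' N')
  have "site_membranes N1 = site_membranes N" "site_membranes N1' = site_membranes N"
    using r_struct.hyps site_membranes_sys_equiv site_membranes_red by metis+
  then have "coherent N1" "dfa_membranes N1" "dfa_membranes N1'"
    using r_struct.prems(1,2) coherent_site_membranes_cong[of N1 N] by (simp_all add: dfa_membranes_def)
  moreover have "sys_ok N1"
    using sys_ok_sys_equiv r_struct.hyps(1) r_struct.prems(2,3) by blast
  ultimately show ?case
    using r_struct.IH sys_ok_sys_equiv r_struct.hyps(3) by blast
next
  case (r_mig k A P Ml Mk l Q R)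
  then show ?case by (intro sys_ok_mig) auto
qed

theorem mainTheorem7:
  fixes N N' :: "('a, 'l) sys"
  assumes "is_system N"
    and "coherent N"
    and "sys_ok N"
    and "red N N'"
  shows "coherent N' \<and> sys_ok N'"
proof
  have "site_membranes N' = site_membranes N"
    using assms(4) by (rule site_membranes_red)
  with assms(2) show "coherent N'"
    using coherent_site_membranes_cong by blast
  show "sys_ok N'"
    using assms(4,2) dfa_membranes_if_is_system[OF assms(1)] assms(3) by (rule sys_ok_red)
qed

end
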